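(* Let $\mathcal{M}$ be a complete Riemannian submanifold of $\mathbb{R}^n$ with the Riemannian metric induced by the Euclidean inner product, let $f:\mathbb{R}^n\to\mathbb{R}$ be a lower semicontinuous function, let $x\in\mathcal{M}$, and let $R$ be any retraction on $\mathcal{M}$, with $R_x$ its restriction to $T_x\mathcal{M}$. Then $v\in\hat\partial_{\mathcal R} f(x)$ if and only if $v\in T_x\mathcal{M}$ and \[ f\circ R_x(\eta_x)\ \ge\ f\circ R_x(0_x)+\langle v,\eta_x\rangle+o(\|\eta_x\|)\qquad\text{for all }\eta_x\in T_x\mathcal{M}. \]
   Context: $T_x\mathcal{M}$ is the tangent space of $\mathcal{M}$ at $x$ and $0_x$ its zero element; $T\mathcal{M}$ is the tangent bundle. A retraction is a smooth map $R:T\mathcal{M}\to\mathcal{M}$ such that, writing $R_x$ for its restriction to $T_x\mathcal{M}$, $R_x(0_x)=x$ and the differential satisfies $dR_x(0_x)=\mathrm{id}_{T_x\mathcal{M}}$. For a function $h$ that is $C^1$ on a neighborhood of $x$ in $\mathbb{R}^n$, its Riemannian gradient is $\operatorname{grad}h(x)=\operatorname{Proj}_{T_x\mathcal{M}}\nabla h(x)$ (orthogonal projection). Write $B_{x,\delta}=\{y:\|y-x\|\le\delta\}$. The Riemannian Fréchet subdifferential of $f$ at $x\in\mathcal{M}$ is $\hat\partial_{\mathcal R} f(x)=\{\operatorname{grad}h(x):\ \exists\,\delta>0$ such that $h\in C^1(B_{x,\delta})$ and $f-h$ attains a local minimum at $x$ on $\mathcal{M}\}$. *)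

theory Defs
  imports "HOL-Analysis.Analysis" "HOL-Library.Landau_Symbols"
begin

text \<open>C-infinity maps on an open subset S of a Euclidean space: all iterated
  (Frechet) derivatives exist on S.  G ds is the iterated partial derivative
  along the list of basis directions ds.\<close>
definition Cinf_on :: "'a::euclidean_space set \<Rightarrow> ('a \<Rightarrow> 'b::real_normed_vector) \<Rightarrow> bool" where
  "Cinf_on S f \<longleftrightarrow> open S \<and>
     (\<exists>G :: 'a list \<Rightarrow> 'a \<Rightarrow> 'b.
        (\<forall>x\<in>S. G [] x = f x) \<and>
        (\<forall>ds. \<forall>x\<in>S. (G ds has_derivative (\<lambda>h. \<Sum>i\<in>Basis. (h \<bullet> i) *\<^sub>R G (i # ds) x)) (at x)))"

definition smooth_map_on :: "'a::euclidean_space set \<Rightarrow> ('a \<Rightarrow> 'b::real_normed_vector) \<Rightarrow> bool" where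
  "smooth_map_on A F \<longleftrightarrow>
     (\<forall>p\<in>A. \<exists>U G. open U \<and> p \<in> U \<and> Cinf_on U G \<and> (\<forall>q\<in>U \<inter> A. G q = F q))"

definition embedded_submanifold :: "'a::euclidean_space set \<Rightarrow> bool" where
  "embedded_submanifold M \<longleftrightarrow>
     (\<exists>d. \<forall>p\<in>M. \<exists>U W (\<phi>::'a \<Rightarrow> 'a) (\<psi>::'a \<Rightarrow> 'a) L.
        open U \<and> p \<in> U \<and> open W \<and> Cinf_on U \<phi> \<and> Cinf_on W \<psi> \<and>
        \<phi> ` U = W \<and> (\<forall>q\<in>U. \<psi> (\<phi> q) = q) \<and> (\<forall>w\<in>W. \<phi> (\<psi> w) = w) \<and>
        subspace L \<and> dim L = d \<and> \<phi> ` (M \<inter> U) = L \<inter> W)"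

definition tangent_space :: "'a::euclidean_space set \<Rightarrow> 'a \<Rightarrow> 'a set" where
  "tangent_space M x = {v. \<exists>(\<gamma>::real \<Rightarrow> 'a) e. e > 0 \<and> Cinf_on {-e<..<e} \<gamma> \<and>
       (\<forall>t\<in>{-e<..<e}. \<gamma> t \<in> M) \<and> \<gamma> 0 = x \<and> (\<gamma> has_vector_derivative v) (at 0)}"

definition tangent_bundle :: "'a::euclidean_space set \<Rightarrow> ('a \<times> 'a) set" where
  "tangent_bundle M = {(x, v). x \<in> M \<and> v \<in> tangent_space M x}"

text \<open>Points p, q can be joined in M by a C1 curve of length less than e
  (the induced Riemannian distance is the infimum of such lengths).\<close>
definition joinable :: "'a::euclidean_space set \<Rightarrow> 'a \<Rightarrow> 'a \<Rightarrow> real \<Rightarrow> bool" where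
  "joinable M p q e \<longleftrightarrow> (\<exists>\<gamma>. \<gamma> C1_differentiable_on {0..1} \<and> (\<forall>t\<in>{0..1}. \<gamma> t \<in> M) \<and>
       \<gamma> 0 = p \<and> \<gamma> 1 = q \<and> integral {0..1} (\<lambda>t. norm (vector_derivative \<gamma> (at t))) < e)"

text \<open>Completeness of M as a metric space with the induced Riemannian distance.\<close>
definition riemannian_complete :: "'a::euclidean_space set \<Rightarrow> bool" where
  "riemannian_complete M \<longleftrightarrow>
     (\<forall>X::nat \<Rightarrow> 'a. (\<forall>n. X n \<in> M) \<and> (\<forall>e>0. \<exists>N. \<forall>m\<ge>N. \<forall>k\<ge>N. joinable M (X m) (X k) e) \<longrightarrow>
          (\<exists>p\<in>M. \<forall>e>0. \<exists>N. \<forall>m\<ge>N. joinable M (X m) p e))"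

definition riem_retraction :: "'a::euclidean_space set \<Rightarrow> ('a \<times> 'a \<Rightarrow> 'a) \<Rightarrow> bool" where
  "riem_retraction M R \<longleftrightarrow> smooth_map_on (tangent_bundle M) R \<and>
     (\<forall>z\<in>tangent_bundle M. R z \<in> M) \<and>
     (\<forall>x\<in>M. R (x, 0) = x \<and> ((\<lambda>v. R (x, v)) has_derivative id) (at 0 within tangent_space M x))"

definition lower_semicontinuous :: "('a::topological_space \<Rightarrow> real) \<Rightarrow> bool" where
  "lower_semicontinuous f \<longleftrightarrow> (\<forall>a. open {x. a < f x})"

definition proj_onto :: "'a::real_inner set \<Rightarrow> 'a \<Rightarrow> 'a" where
  "proj_onto T g = (THE p. p \<in> T \<and> (\<forall>w\<in>T. (g - p) \<bullet> w = 0))"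

definition riem_frechet_subdiff :: "'a::euclidean_space set \<Rightarrow> ('a \<Rightarrow> real) \<Rightarrow> 'a \<Rightarrow> 'a set" where
  "riem_frechet_subdiff M f x =
     {proj_onto (tangent_space M x) (g x) | g h. \<exists>\<delta>>0.
        (\<forall>y\<in>cball x \<delta>. (h has_derivative (\<lambda>u. g y \<bullet> u)) (at y)) \<and> continuous_on (cball x \<delta>) g \<and>
        (\<exists>\<epsilon>>0. \<forall>y\<in>M. dist y x < \<epsilon> \<longrightarrow> f x - h x \<le> f y - h y)}"

end

theory Submission
  imports Defs
begin

text \<open>
  If \<open>f - h\<close> has a local minimum at \<open>x\<close> on \<open>M\<close>, then along the retraction curve
  \<open>f (R\<^sub>x \<eta>) - f x \<ge> h (R\<^sub>x \<eta>) - h x = \<langle>\<nabla>h x, \<eta>\<rangle> + o(\<bar>\<eta>\<bar>)\<close>, and for tangent \<open>\<eta>\<close> the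
  Euclidean gradient may be replaced by its tangential projection \<open>v\<close>.

  Conversely, the inverse function theorem in a slice chart shows that every \<open>y \<in> M\<close> near \<open>x\<close>
  is \<open>R\<^sub>x \<eta>\<close> for a tangent \<open>\<eta>\<close> with \<open>\<bar>\<eta>\<bar> = O(\<bar>y - x\<bar>)\<close>; since \<open>R\<^sub>x \<eta> = x + \<eta> + o(\<bar>\<eta>\<bar>)\<close>,
  the expansion along \<open>R\<^sub>x\<close> becomes \<open>f y \<ge> f x + \<langle>v, y - x\<rangle> - o(\<bar>y - x\<bar>)\<close> on \<open>M\<close>.
  The error term is dominated by a radial \<open>C\<^sup>1\<close> function \<open>k \<bar>y - x\<bar>\<close> with \<open>k 0 = k' 0 = 0\<close>,
  and \<open>h y = f x + \<langle>v, y - x\<rangle> - k \<bar>y - x\<bar>\<close> is the required test function.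
\<close>

lemma Cinf_on_imp_C1:
  assumes "Cinf_on S f"
  obtains f' where "continuous_on S f'" "\<forall>x\<in>S. (f has_derivative blinfun_apply (f' x)) (at x)"
proof -
  obtain G :: "'a list \<Rightarrow> 'a \<Rightarrow> 'b" where S: "open S" and G0: "\<forall>x\<in>S. G [] x = f x"
    and GD: "\<forall>ds. \<forall>x\<in>S. (G ds has_derivative (\<lambda>h. \<Sum>i\<in>Basis. (h \<bullet> i) *\<^sub>R G (i # ds) x)) (at x)"
    using assms unfolding Cinf_on_def by blast
  define f' where "f' x = Blinfun (\<lambda>h. \<Sum>i\<in>Basis. (h \<bullet> i) *\<^sub>R G [i] x)" for x
  have f'_apply: "blinfun_apply (f' x) = (\<lambda>h. \<Sum>i\<in>Basis. (h \<bullet> i) *\<^sub>R G [i] x)" for x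
    unfolding f'_def
    by (intro bounded_linear_Blinfun_apply bounded_linear_sum bounded_linear_scaleR_const
        bounded_linear_inner_left)
  have "continuous_on S (G ds)" for ds
    by (rule continuous_at_imp_continuous_on) (use GD has_derivative_continuous in blast)
  then have "continuous_on S f'"
    by (intro continuous_on_blinfun_componentwise) (simp add: f'_apply continuous_intros)
  moreover have "(f has_derivative blinfun_apply (f' x)) (at x)" if "x \<in> S" for x
  proof -
    have "(G [] has_derivative blinfun_apply (f' x)) (at x)" using GD that by (simp add: f'_apply)
    then show ?thesis by (rule has_derivative_transform_within_open[OF _ S that]) (use G0 in simp)
  qed
  ultimately show ?thesis using that by blast
qed

text \<open>If \<open>G ds\<close> is the partial derivative of a map along the basis directions \<open>ds\<close>, then
  \<open>directional_derivs G w n ds\<close> is its further \<open>n\<close>-th derivative along \<open>w\<close>.\<close>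

fun directional_derivs ::
  "('a::euclidean_space list \<Rightarrow> 'a \<Rightarrow> 'b::real_normed_vector) \<Rightarrow> 'a \<Rightarrow> nat \<Rightarrow> 'a list \<Rightarrow> 'a \<Rightarrow> 'b"
where
  "directional_derivs G w 0 ds y = G ds y"
| "directional_derivs G w (Suc n) ds y =
     (\<Sum>j\<in>Basis. (w \<bullet> j) *\<^sub>R directional_derivs G w n (ds @ [j]) y)"

lemma has_derivative_directional_derivs:
  assumes "\<forall>ds. \<forall>x\<in>W. (G ds has_derivative (\<lambda>h. \<Sum>i\<in>Basis. (h \<bullet> i) *\<^sub>R G (i # ds) x)) (at x)"
    and "y \<in> W"
  shows "(directional_derivs G w n ds has_derivative
           (\<lambda>h. \<Sum>i\<in>Basis. (h \<bullet> i) *\<^sub>R directional_derivs G w n (i # ds) y)) (at y)"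
proof (induction n arbitrary: ds)
  case 0
  then show ?case using assms by simp
next
  case (Suc n)
  let ?D = "\<lambda>i j. directional_derivs G w n (i # ds @ [j]) y"
  have "((\<lambda>y. \<Sum>j\<in>Basis. (w \<bullet> j) *\<^sub>R directional_derivs G w n (ds @ [j]) y) has_derivative
     (\<lambda>h. \<Sum>j\<in>Basis. (w \<bullet> j) *\<^sub>R (\<Sum>i\<in>Basis. (h \<bullet> i) *\<^sub>R ?D i j))) (at y)"
    by (intro has_derivative_sum has_derivative_scaleR_right) (use Suc in auto)
  moreover have "(\<lambda>h. \<Sum>j\<in>Basis. (w \<bullet> j) *\<^sub>R (\<Sum>i\<in>Basis. (h \<bullet> i) *\<^sub>R ?D i j)) =
      (\<lambda>h. \<Sum>i\<in>Basis. (h \<bullet> i) *\<^sub>R (\<Sum>j\<in>Basis. (w \<bullet> j) *\<^sub>R ?D i j))"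
    by (rule ext) (simp add: scaleR_sum_right, subst sum.swap, simp add: scaleR_scaleR mult.commute)
  ultimately show ?case by simp
qed

lemma Cinf_on_compose_line:
  fixes \<psi> :: "'a::euclidean_space \<Rightarrow> 'b::real_normed_vector"
  assumes "Cinf_on W \<psi>" "open S" "\<And>t. t \<in> S \<Longrightarrow> a + t *\<^sub>R w \<in> W"
  shows "Cinf_on S (\<lambda>t::real. \<psi> (a + t *\<^sub>R w))"
proof -
  obtain G :: "'a list \<Rightarrow> 'a \<Rightarrow> 'b" where G0: "\<forall>x\<in>W. G [] x = \<psi> x"
    and GD: "\<forall>ds. \<forall>x\<in>W. (G ds has_derivative (\<lambda>h. \<Sum>i\<in>Basis. (h \<bullet> i) *\<^sub>R G (i # ds) x)) (at x)"
    using assms unfolding Cinf_on_def by blast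
  define H where "H ds t = directional_derivs G w (length ds) [] (a + t *\<^sub>R w)"
    for ds :: "real list" and t
  have "(H ds has_derivative (\<lambda>h. \<Sum>i\<in>Basis. (h \<bullet> i) *\<^sub>R H (i # ds) t)) (at t)" if "t \<in> S" for ds t
  proof -
    have "((\<lambda>t. a + t *\<^sub>R w) has_derivative (\<lambda>s. s *\<^sub>R w)) (at t)"
      by (auto intro!: derivative_eq_intros)
    from has_derivative_compose[OF this has_derivative_directional_derivs[OF GD assms(3)[OF that]]]
    show ?thesis
      unfolding H_def by (rule has_derivative_eq_rhs) (auto simp: scaleR_sum_right)
  qed
  moreover have "\<forall>t\<in>S. H [] t = \<psi> (a + t *\<^sub>R w)"
    using G0 assms(3) by (simp add: H_def)
  ultimately show ?thesis unfolding Cinf_on_def using assms(2) by blast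
qed

lemma has_vector_derivative_imp_difference_quotient:
  fixes f :: "real \<Rightarrow> 'a::real_normed_vector"
  assumes "(f has_vector_derivative D) (at 0)"
  shows "((\<lambda>t. (f t - f 0) /\<^sub>R t) \<longlongrightarrow> D) (at 0)"
proof -
  have "((\<lambda>t. norm (f t - f 0 - t *\<^sub>R D) / norm t) \<longlongrightarrow> 0) (at 0)"
    using assms unfolding has_vector_derivative_def has_derivative_iff_norm by simp
  moreover have
    "eventually (\<lambda>t. norm (f t - f 0 - t *\<^sub>R D) / norm t = norm ((f t - f 0) /\<^sub>R t - D)) (at 0)"
  proof (rule eventually_at_filter[THEN iffD2, OF always_eventually], intro allI impI)
    fix t :: real assume "t \<noteq> 0"
    then have "(f t - f 0) /\<^sub>R t - D = inverse t *\<^sub>R (f t - f 0 - t *\<^sub>R D)"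
      by (simp add: scaleR_diff_right)
    then show "norm (f t - f 0 - t *\<^sub>R D) / norm t = norm ((f t - f 0) /\<^sub>R t - D)"
      by (simp add: divide_simps)
  qed
  ultimately have "((\<lambda>t. norm ((f t - f 0) /\<^sub>R t - D)) \<longlongrightarrow> 0) (at 0)"
    by (rule Lim_transform_eventually)
  then show ?thesis
    using tendsto_norm_zero_iff LIM_zero_iff by blast
qed

section \<open>Slice charts and tangent spaces\<close>

text \<open>One chart from the definition of \<open>embedded_submanifold\<close>.\<close>

locale slice_chart =
  fixes M U W :: "'a::euclidean_space set" and \<phi> \<psi> :: "'a \<Rightarrow> 'a" and L :: "'a set"
  assumes open_U: "open U" and open_W: "open W"
    and smooth_phi: "Cinf_on U \<phi>" and smooth_psi: "Cinf_on W \<psi>"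
    and image_U: "\<phi> ` U = W"
    and psi_phi: "\<And>q. q \<in> U \<Longrightarrow> \<psi> (\<phi> q) = q" and phi_psi: "\<And>w. w \<in> W \<Longrightarrow> \<phi> (\<psi> w) = w"
    and subspace_L: "subspace L" and slice: "\<phi> ` (M \<inter> U) = L \<inter> W"

lemma embedded_submanifold_slice_chart:
  assumes "embedded_submanifold M" "p \<in> M"
  obtains U W \<phi> \<psi> L where "slice_chart M U W \<phi> \<psi> L" "p \<in> U"
proof -
  obtain d where charts: "\<forall>p\<in>M. \<exists>U W (\<phi>::'a \<Rightarrow> 'a) (\<psi>::'a \<Rightarrow> 'a) L.
        open U \<and> p \<in> U \<and> open W \<and> Cinf_on U \<phi> \<and> Cinf_on W \<psi> \<and>
        \<phi> ` U = W \<and> (\<forall>q\<in>U. \<psi> (\<phi> q) = q) \<and> (\<forall>w\<in>W. \<phi> (\<psi> w) = w) \<and>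
        subspace L \<and> dim L = d \<and> \<phi> ` (M \<inter> U) = L \<inter> W"
    using assms(1) unfolding embedded_submanifold_def by (elim exE) (erule that)
  obtain U W L and \<phi> \<psi> :: "'a \<Rightarrow> 'a" where ch: "open U" "p \<in> U" "open W" "Cinf_on U \<phi>" "Cinf_on W \<psi>"
    "\<phi> ` U = W" "\<forall>q\<in>U. \<psi> (\<phi> q) = q" "\<forall>w\<in>W. \<phi> (\<psi> w) = w" "subspace L" "\<phi> ` (M \<inter> U) = L \<inter> W"
    using bspec[OF charts assms(2)] by (elim exE conjE) (rule that, assumption+)
  have "slice_chart M U W \<phi> \<psi> L" by (simp add: slice_chart_def ch)
  then show ?thesis using ch(2) by (rule that)
qed

context slice_chart
begin

lemma chart_inverse_derivative:
  assumes x: "x \<in> U" and d\<phi>: "(\<phi> has_derivative \<phi>') (at x)"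
  obtains \<psi>' where "(\<psi> has_derivative \<psi>') (at (\<phi> x))" "\<forall>u. \<psi>' (\<phi>' u) = u"
proof -
  obtain D\<psi> where D\<psi>: "\<forall>q\<in>W. (\<psi> has_derivative blinfun_apply (D\<psi> q)) (at q)"
    using Cinf_on_imp_C1[OF smooth_psi] by metis
  define \<psi>' where "\<psi>' = blinfun_apply (D\<psi> (\<phi> x))"
  have d\<psi>: "(\<psi> has_derivative \<psi>') (at (\<phi> x))"
    unfolding \<psi>'_def using D\<psi> image_U x by blast
  have "((\<lambda>q. \<psi> (\<phi> q)) has_derivative (\<lambda>u. \<psi>' (\<phi>' u))) (at x)"
    by (rule has_derivative_compose[OF d\<phi> d\<psi>])
  moreover have "((\<lambda>q. \<psi> (\<phi> q)) has_derivative (\<lambda>u. u)) (at x)"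
    by (rule has_derivative_transform_within_open[OF has_derivative_ident open_U x])
      (use psi_phi in auto)
  ultimately have "(\<lambda>u. \<psi>' (\<phi>' u)) = (\<lambda>u. u)" by (rule has_derivative_unique)
  then show ?thesis by (intro that[OF d\<psi>]) (simp add: fun_eq_iff)
qed

lemma tangent_space_subset_chart_image:
  assumes x: "x \<in> M \<inter> U" and d\<phi>: "(\<phi> has_derivative \<phi>') (at x)" and inv: "\<forall>u. \<psi>' (\<phi>' u) = u"
  shows "tangent_space M x \<subseteq> \<psi>' ` L"
proof
  fix v assume "v \<in> tangent_space M x"
  then obtain \<gamma> e where e: "e > 0" and \<gamma>M: "\<forall>t\<in>{-e<..<e}. \<gamma> t \<in> M"
    and \<gamma>0: "\<gamma> 0 = x" and d\<gamma>: "(\<gamma> has_vector_derivative v) (at 0)"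
    unfolding tangent_space_def by blast
  have "((\<lambda>t. \<phi> (\<gamma> t)) has_derivative (\<lambda>s. \<phi>' (s *\<^sub>R v))) (at 0)"
    using has_derivative_compose[OF d\<gamma>[unfolded has_vector_derivative_def]] d\<phi> \<gamma>0 by simp
  then have "((\<lambda>t. \<phi> (\<gamma> t)) has_vector_derivative \<phi>' v) (at 0)"
    unfolding has_vector_derivative_def using linear_scale[OF has_derivative_linear[OF d\<phi>]] by simp
  then have lim: "((\<lambda>t. (\<phi> (\<gamma> t) - \<phi> (\<gamma> 0)) /\<^sub>R t) \<longlongrightarrow> \<phi>' v) (at 0)"
    by (rule has_vector_derivative_imp_difference_quotient)
  have "isCont \<gamma> 0" using d\<gamma> has_vector_derivative_continuous by blast
  then have "(\<gamma> \<longlongrightarrow> x) (at 0)" using \<gamma>0 by (simp add: isCont_def)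
  then have "eventually (\<lambda>t. \<gamma> t \<in> U) (at 0)"
    by (rule topological_tendstoD[OF _ open_U]) (use x in blast)
  moreover have "eventually (\<lambda>t. t \<in> {-e<..<e}) (at (0::real))"
    unfolding eventually_at using e by (intro exI[of _ e]) (auto simp: dist_real_def)
  \<comment> \<open>the difference quotients of \<open>\<phi> \<circ> \<gamma>\<close> lie in the closed subspace \<open>L\<close>, hence so does \<open>\<phi>' v\<close>\<close>
  ultimately have "eventually (\<lambda>t. (\<phi> (\<gamma> t) - \<phi> (\<gamma> 0)) /\<^sub>R t \<in> L) (at 0)"
  proof eventually_elim
    case (elim t)
    then have "\<phi> (\<gamma> t) \<in> L" "\<phi> (\<gamma> 0) \<in> L" using \<gamma>M \<gamma>0 x slice by blast+
    then show ?case using subspace_L by (simp add: subspace_diff subspace_scale)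
  qed
  then have "\<phi>' v \<in> L"
    using Lim_in_closed_set[OF closed_subspace[OF subspace_L] _ _ lim]
    by (simp add: trivial_limit_at)
  then show "v \<in> \<psi>' ` L" using inv[rule_format, of v] by (metis image_eqI)
qed

lemma chart_image_subset_tangent_space:
  assumes x: "x \<in> M \<inter> U" and d\<psi>: "(\<psi> has_derivative \<psi>') (at (\<phi> x))"
  shows "\<psi>' ` L \<subseteq> tangent_space M x"
proof
  fix v assume "v \<in> \<psi>' ` L"
  then obtain w where w: "w \<in> L" and v: "v = \<psi>' w" by blast
  \<comment> \<open>\<open>v\<close> is the velocity of \<open>t \<mapsto> \<psi> (\<phi> x + t w)\<close>, a curve in \<open>M\<close> by the slice property\<close>
  have \<phi>x: "\<phi> x \<in> L \<inter> W" using x slice by blast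
  obtain \<epsilon> where \<epsilon>: "\<epsilon> > 0" "ball (\<phi> x) \<epsilon> \<subseteq> W" using open_W \<phi>x open_contains_ball by blast
  define e where "e = \<epsilon> / (norm w + 1)"
  have e: "e > 0" using \<epsilon> by (simp add: e_def add_nonneg_pos)
  have line_W: "\<phi> x + t *\<^sub>R w \<in> W" if "t \<in> {-e<..<e}" for t
  proof -
    have "\<bar>t\<bar> < e" using that by auto
    then have "\<bar>t\<bar> * (norm w + 1) < \<epsilon>"
      by (simp add: e_def pos_less_divide_eq add_nonneg_pos)
    moreover have "norm (t *\<^sub>R w) \<le> \<bar>t\<bar> * (norm w + 1)" by (simp add: mult_left_mono)
    ultimately have "norm (t *\<^sub>R w) < \<epsilon>" by linarith
    then show ?thesis using \<epsilon>(2) by (auto simp: dist_norm)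
  qed
  have "\<psi> (\<phi> x + t *\<^sub>R w) \<in> M" if "t \<in> {-e<..<e}" for t
  proof -
    have "\<phi> x + t *\<^sub>R w \<in> L \<inter> W"
      using line_W[OF that] \<phi>x w subspace_L by (simp add: subspace_add subspace_scale)
    then obtain q where "q \<in> M \<inter> U" "\<phi> q = \<phi> x + t *\<^sub>R w"
      unfolding slice[symmetric] by (metis imageE)
    then show ?thesis using psi_phi by force
  qed
  moreover have "Cinf_on {-e<..<e} (\<lambda>t. \<psi> (\<phi> x + t *\<^sub>R w))"
    by (rule Cinf_on_compose_line[OF smooth_psi open_greaterThanLessThan line_W])
  moreover have "((\<lambda>t. \<psi> (\<phi> x + t *\<^sub>R w)) has_vector_derivative \<psi>' w) (at 0)"
  proof -
    have "((\<lambda>t. \<phi> x + t *\<^sub>R w) has_derivative (\<lambda>s. s *\<^sub>R w)) (at 0)"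
      by (auto intro!: derivative_eq_intros)
    from has_derivative_compose[OF this] d\<psi>
    have "((\<lambda>t. \<psi> (\<phi> x + t *\<^sub>R w)) has_derivative (\<lambda>s. \<psi>' (s *\<^sub>R w))) (at 0)" by simp
    then show ?thesis
      unfolding has_vector_derivative_def
      using linear_scale[OF has_derivative_linear[OF d\<psi>]] by simp
  qed
  moreover have "\<psi> (\<phi> x + 0 *\<^sub>R w) = x" using psi_phi x by simp
  ultimately show "v \<in> tangent_space M x"
    unfolding tangent_space_def v using e by blast
qed

lemma tangent_space_chart_image:
  assumes x: "x \<in> M \<inter> U" and d\<phi>: "(\<phi> has_derivative \<phi>') (at x)"
  obtains \<psi>' where "linear \<psi>'" "\<forall>u. \<psi>' (\<phi>' u) = u" "tangent_space M x = \<psi>' ` L"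
proof -
  obtain \<psi>' where d\<psi>: "(\<psi> has_derivative \<psi>') (at (\<phi> x))" and inv: "\<forall>u. \<psi>' (\<phi>' u) = u"
    using chart_inverse_derivative[OF _ d\<phi>] x by blast
  show ?thesis
  proof (rule that[OF has_derivative_linear[OF d\<psi>] inv])
    show "tangent_space M x = \<psi>' ` L"
      using tangent_space_subset_chart_image[OF x d\<phi> inv] chart_image_subset_tangent_space[OF x d\<psi>]
      by (rule subset_antisym)
  qed
qed

end

lemma subspace_tangent_space:
  assumes "embedded_submanifold M" "x \<in> M"
  shows "subspace (tangent_space M x)"
proof -
  obtain U W \<phi> \<psi> L where "slice_chart M U W \<phi> \<psi> L" and x: "x \<in> U"
    using embedded_submanifold_slice_chart[OF assms] .
  then interpret slice_chart M U W \<phi> \<psi> L by simp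
  obtain D\<phi> where "\<forall>q\<in>U. (\<phi> has_derivative blinfun_apply (D\<phi> q)) (at q)"
    using Cinf_on_imp_C1[OF smooth_phi] by metis
  then have d\<phi>: "(\<phi> has_derivative D\<phi> x) (at x)" using x by blast
  have "x \<in> M \<inter> U" using assms(2) x by simp
  then obtain \<psi>' where \<psi>': "linear \<psi>'" and T_eq: "tangent_space M x = \<psi>' ` L"
    using tangent_space_chart_image[OF _ d\<phi>] by metis
  show ?thesis unfolding T_eq by (rule linear_subspace_image[OF \<psi>' subspace_L])
qed

lemma proj_onto_eqI:
  assumes T: "subspace T" and p: "p \<in> T" "\<forall>w\<in>T. (g - p) \<bullet> w = 0"
  shows "proj_onto T g = p"
  unfolding proj_onto_def
proof (rule the_equality)
  show "p \<in> T \<and> (\<forall>w\<in>T. (g - p) \<bullet> w = 0)" using p by blast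
  fix p' assume p': "p' \<in> T \<and> (\<forall>w\<in>T. (g - p') \<bullet> w = 0)"
  then have "p - p' \<in> T" using T p by (simp add: subspace_diff)
  then have "(g - p') \<bullet> (p - p') - (g - p) \<bullet> (p - p') = 0" using p p' by simp
  then have "(p - p') \<bullet> (p - p') = 0" by (simp add: inner_diff_left inner_diff_right algebra_simps)
  then show "p' = p" by simp
qed

lemma proj_onto:
  fixes T :: "'a::euclidean_space set"
  assumes T: "subspace T"
  shows "proj_onto T g \<in> T" "\<forall>w\<in>T. (g - proj_onto T g) \<bullet> w = 0"
proof -
  obtain y z where "y \<in> span T" "\<And>w. w \<in> span T \<Longrightarrow> orthogonal z w" "g = y + z"
    using orthogonal_subspace_decomp_exists by blast
  moreover have "span T = T" using T by simp
  ultimately have "y \<in> T" "\<forall>w\<in>T. (g - y) \<bullet> w = 0" by (auto simp: orthogonal_def)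
  with proj_onto_eqI[OF T] show "proj_onto T g \<in> T" "\<forall>w\<in>T. (g - proj_onto T g) \<bullet> w = 0"
    by simp_all
qed

lemma linear_proj_onto:
  fixes T :: "'a::euclidean_space set"
  assumes T: "subspace T"
  shows "linear (proj_onto T)"
proof (rule linearI)
  fix a b :: 'a and c :: real
  note pa = proj_onto[OF T, of a] and pb = proj_onto[OF T, of b]
  show "proj_onto T (a + b) = proj_onto T a + proj_onto T b"
    using pa pb T
    by (intro proj_onto_eqI) (auto simp: subspace_add inner_diff_left inner_add_left)
  show "proj_onto T (c *\<^sub>R a) = c *\<^sub>R proj_onto T a"
    using pa T
    by (intro proj_onto_eqI) (auto simp: subspace_scale inner_diff_left)
qed

section \<open>Local surjectivity of the retraction\<close>

lemma has_derivative_imp_locally_lipschitz: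
  assumes "(f has_derivative f') (at a)"
  obtains C where "C > 0" "eventually (\<lambda>y. norm (f y - f a) \<le> C * norm (y - a)) (nhds a)"
proof -
  obtain K where K: "K > 0" "\<And>h. norm (f' h) \<le> norm h * K"
    using bounded_linear.pos_bounded[OF has_derivative_bounded_linear[OF assms]] by blast
  have "\<forall>e>0. eventually (\<lambda>y. norm (f y - f a - f' (y - a)) \<le> e * norm (y - a)) (at a)"
    using assms by (simp add: has_derivative_within_alt2)
  from this[rule_format, of 1]
  have "eventually (\<lambda>y. norm (f y - f a - f' (y - a)) \<le> norm (y - a)) (at a)"
    by simp
  then have "eventually (\<lambda>y. norm (f y - f a - f' (y - a)) \<le> norm (y - a)) (nhds a)"
    unfolding eventually_at_filter
    by (rule eventually_mono) (auto simp: linear_0[OF has_derivative_linear[OF assms]])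
  then have "eventually (\<lambda>y. norm (f y - f a) \<le> (K + 1) * norm (y - a)) (nhds a)"
  proof (rule eventually_mono)
    fix y assume "norm (f y - f a - f' (y - a)) \<le> norm (y - a)"
    moreover have "norm (f y - f a) \<le> norm (f' (y - a)) + norm (f y - f a - f' (y - a))"
      by (rule norm_triangle_sub)
    moreover have "(K + 1) * norm (y - a) = norm (y - a) * K + norm (y - a)"
      by (simp add: algebra_simps)
    ultimately show "norm (f y - f a) \<le> (K + 1) * norm (y - a)" using K(2)[of "y - a"] by linarith
  qed
  with K(1) show ?thesis by (intro that[of "K + 1"]) simp_all
qed

lemma local_inverse_lipschitz:
  fixes F :: "'a::euclidean_space \<Rightarrow> 'a"
  assumes "open S" "a \<in> S" "\<And>z. z \<in> S \<Longrightarrow> (F has_derivative blinfun_apply (F' z)) (at z)"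
    and "continuous_on S F'" "B o\<^sub>L F' a = id_blinfun"
  obtains U V g C where "U \<subseteq> S" "open V" "F a \<in> V" "homeomorphism U V F g" "C > 0"
    "eventually (\<lambda>w. norm (g w - a) \<le> C * norm (w - F a)) (nhds (F a))"
proof -
  obtain U V g g' where UV: "U \<subseteq> S" "a \<in> U" "open V" "F a \<in> V" and hom: "homeomorphism U V F g"
    and dg: "\<And>w. w \<in> V \<Longrightarrow> (g has_derivative g' w) (at w)"
    using inverse_function_theorem[OF assms(1,3,4,2,5)] by metis
  have "g (F a) = a" using hom UV(2) by (simp add: homeomorphism_def)
  moreover obtain C where
    "C > 0" "eventually (\<lambda>w. norm (g w - g (F a)) \<le> C * norm (w - F a)) (nhds (F a))"
    by (rule has_derivative_imp_locally_lipschitz[OF dg[OF UV(4)]])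
  ultimately show ?thesis by (intro that[OF UV(1,3,4) hom]) simp_all
qed

lemma has_derivative_within_subspace_unique:
  assumes A: "(f has_derivative A) (at 0 within T)" and B: "(f has_derivative B) (at 0 within T)"
    and T: "subspace T" and k: "k \<in> T"
  shows "A k = B k"
proof -
  let ?line = "\<lambda>t::real. t *\<^sub>R k"
  have line: "(?line has_derivative ?line) (at 0)"
    by (rule bounded_linear_imp_has_derivative[OF bounded_linear_scaleR_left])
  have sub: "range ?line \<subseteq> T" using subspace_scale[OF T k] by auto
  have "((f \<circ> ?line) has_derivative (A \<circ> ?line)) (at 0)"
    by (rule diff_chain_within[OF line]) (use has_derivative_subset[OF A sub] in simp)
  moreover have "((f \<circ> ?line) has_derivative (B \<circ> ?line)) (at 0)"
    by (rule diff_chain_within[OF line]) (use has_derivative_subset[OF B sub] in simp)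
  ultimately have "A \<circ> ?line = B \<circ> ?line" by (rule has_derivative_unique)
  then show ?thesis by (metis comp_apply scaleR_one)
qed

lemma smooth_extension_derivative:
  fixes G :: "'a::real_normed_vector \<times> 'a \<Rightarrow> 'b::real_normed_vector"
  assumes UG: "open UG" "(x, 0) \<in> UG" and dG: "(G has_derivative G') (at (x, 0))"
    and GR: "\<And>\<eta>. \<eta> \<in> T \<Longrightarrow> (x, \<eta>) \<in> UG \<Longrightarrow> G (x, \<eta>) = R (x, \<eta>)"
    and dR: "((\<lambda>\<eta>. R (x, \<eta>)) has_derivative D) (at 0 within T)"
    and T: "subspace T" and k: "k \<in> T"
  shows "G' (0, k) = D k"
proof -
  obtain d where d: "d > 0" "ball (x, 0) d \<subseteq> UG" using UG open_contains_ball by blast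
  have "((\<lambda>\<eta>. (x, \<eta>)) has_derivative (\<lambda>k. (0, k))) (at 0)"
    by (auto intro!: derivative_eq_intros)
  from has_derivative_compose[OF this, of G G'] dG
  have "((\<lambda>\<eta>. G (x, \<eta>)) has_derivative (\<lambda>k. G' (0, k))) (at 0 within T)"
    by (simp add: has_derivative_at_withinI)
  moreover have "((\<lambda>\<eta>. G (x, \<eta>)) has_derivative D) (at 0 within T)"
  proof (rule has_derivative_transform_within[OF dR d(1) subspace_0[OF T]])
    fix \<eta> assume \<eta>: "\<eta> \<in> T" "dist \<eta> 0 < d"
    then have "(x, \<eta>) \<in> ball (x, 0) d" by (simp add: dist_Pair_Pair dist_commute)
    then show "R (x, \<eta>) = G (x, \<eta>)" using GR[OF \<eta>(1)] d(2) by auto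
  qed
  ultimately show ?thesis by (rule has_derivative_within_subspace_unique[OF _ _ T k])
qed

text \<open>The map below agrees with \<open>\<phi> \<circ> R\<^sub>x\<close> on the tangent space and adds the linear part of
  the chart in the normal directions, so that its derivative at \<open>0\<close> is that of \<open>\<phi>\<close> at \<open>x\<close>.\<close>

lemma straightening_map_C1:
  fixes \<phi> :: "'a::euclidean_space \<Rightarrow> 'a" and G :: "'a \<times> 'a \<Rightarrow> 'a" and P :: "'a \<Rightarrow> 'a"
    and D\<phi> :: "'a \<Rightarrow> 'a \<Rightarrow>\<^sub>L 'a" and DG :: "'a \<times> 'a \<Rightarrow> ('a \<times> 'a) \<Rightarrow>\<^sub>L 'a"
  assumes U: "open U" "x \<in> U" and D\<phi>: "\<forall>q\<in>U. (\<phi> has_derivative D\<phi> q) (at q)"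
    and D\<phi>_cont: "continuous_on U D\<phi>"
    and UG: "open UG" "(x, 0) \<in> UG" and DG: "\<forall>q\<in>UG. (G has_derivative DG q) (at q)"
    and DG_cont: "continuous_on UG DG" and Gx0: "G (x, 0) = x"
    and P: "linear P" and DG_P: "\<And>h. DG (x, 0) (0, P h) = P h"
  obtains S and F' :: "'a \<Rightarrow> 'a \<Rightarrow>\<^sub>L 'a"
  where "open S" "0 \<in> S" "\<And>z. z \<in> S \<Longrightarrow> (x, P z) \<in> UG \<and> G (x, P z) \<in> U"
    "\<And>z. z \<in> S \<Longrightarrow> ((\<lambda>z. \<phi> (G (x, P z)) + D\<phi> x (z - P z)) has_derivative F' z) (at z)"
    "continuous_on S F'" "F' 0 = D\<phi> x"
proof -
  have blP: "bounded_linear P" using P linear_conv_bounded_linear by blast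
  define S1 where "S1 = (\<lambda>z. (x, P z)) -` UG"
  define S where "S = (\<lambda>z. G (x, P z)) -` U \<inter> S1"
  have cont_pair: "continuous_on A (\<lambda>z. (x, P z))" for A
    by (intro continuous_on_Pair continuous_on_const linear_continuous_on blP)
  have "continuous_on UG G"
    by (rule continuous_at_imp_continuous_on) (use DG has_derivative_continuous in blast)
  then have cont_GP: "continuous_on S1 (\<lambda>z. G (x, P z))"
    by (rule continuous_on_compose2[OF _ cont_pair]) (auto simp: S1_def)
  have S1: "open S1" unfolding S1_def using UG(1) cont_pair by (rule open_vimage)
  have S: "open S" unfolding S_def using continuous_on_open_vimage[OF S1] cont_GP U(1) by blast
  have S0: "0 \<in> S" unfolding S_def S1_def using UG(2) Gx0 U(2) linear_0[OF P] by simp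
  have S_maps: "(x, P z) \<in> UG" "G (x, P z) \<in> U" if "z \<in> S" for z
    using that by (auto simp: S_def S1_def)
  have bl_normal: "bounded_linear (\<lambda>h. D\<phi> x (h - P h))"
    using bounded_linear_compose[OF blinfun.bounded_linear_right
        bounded_linear_sub[OF bounded_linear_ident blP]] .
  define J where "J = Blinfun (\<lambda>h. (0::'a, P h))"
  define N where "N = Blinfun (\<lambda>h. D\<phi> x (h - P h))"
  have J: "blinfun_apply J = (\<lambda>h. (0, P h))"
    unfolding J_def
    by (intro bounded_linear_Blinfun_apply bounded_linear_Pair bounded_linear_zero blP)
  have N: "blinfun_apply N = (\<lambda>h. D\<phi> x (h - P h))"
    unfolding N_def using bl_normal by (rule bounded_linear_Blinfun_apply)
  define F' where "F' z = (D\<phi> (G (x, P z)) o\<^sub>L DG (x, P z) o\<^sub>L J) + N" for z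
  have dF: "((\<lambda>z. \<phi> (G (x, P z)) + D\<phi> x (z - P z)) has_derivative F' z) (at z)" if "z \<in> S" for z
  proof -
    have "bounded_linear (\<lambda>h. (0::'a, P h))" by (intro bounded_linear_Pair bounded_linear_zero blP)
    from has_derivative_add_const[OF bounded_linear_imp_has_derivative[OF this], of "(x, 0)"]
    have "((\<lambda>z. (x, P z)) has_derivative (\<lambda>h. (0, P h))) (at z)" by simp
    from has_derivative_compose[OF this DG[rule_format, OF S_maps(1)[OF that]]]
    have "((\<lambda>z. G (x, P z)) has_derivative (\<lambda>h. DG (x, P z) (0, P h))) (at z)" .
    from has_derivative_compose[OF this D\<phi>[rule_format, OF S_maps(2)[OF that]]]
    have "((\<lambda>z. \<phi> (G (x, P z))) has_derivative
        (\<lambda>h. D\<phi> (G (x, P z)) (DG (x, P z) (0, P h)))) (at z)" .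
    moreover have "((\<lambda>z. D\<phi> x (z - P z)) has_derivative (\<lambda>h. D\<phi> x (h - P h))) (at z)"
      by (rule bounded_linear_imp_has_derivative[OF bl_normal])
    ultimately show ?thesis
      unfolding F'_def
      by (rule has_derivative_eq_rhs[OF has_derivative_add]) (simp add: fun_eq_iff J N plus_blinfun.rep_eq)
  qed
  have F'_cont: "continuous_on S F'"
  proof -
    have "continuous_on S (\<lambda>z. D\<phi> (G (x, P z)))"
      by (rule continuous_on_compose2[OF D\<phi>_cont continuous_on_subset[OF cont_GP]])
        (auto simp: S_def)
    moreover have "continuous_on S (\<lambda>z. DG (x, P z))"
      by (rule continuous_on_compose2[OF DG_cont cont_pair]) (auto simp: S_def S1_def)
    ultimately show ?thesis unfolding F'_def by (intro continuous_intros)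
  qed
  have F'0: "F' 0 = D\<phi> x"
  proof (rule blinfun_eqI)
    fix h
    have "F' 0 h = D\<phi> x (P h) + D\<phi> x (h - P h)"
      unfolding F'_def using Gx0 linear_0[OF P] by (simp add: J N DG_P plus_blinfun.rep_eq)
    then show "F' 0 h = D\<phi> x h" by (simp add: blinfun.diff_right)
  qed
  show ?thesis using S_maps by (intro that[OF S S0 _ dF F'_cont F'0]) simp_all
qed

lemma straightening_map_local_inverse:
  fixes \<phi> :: "'a::euclidean_space \<Rightarrow> 'a" and G :: "'a \<times> 'a \<Rightarrow> 'a" and P :: "'a \<Rightarrow> 'a"
    and D\<phi> :: "'a \<Rightarrow> 'a \<Rightarrow>\<^sub>L 'a" and DG :: "'a \<times> 'a \<Rightarrow> ('a \<times> 'a) \<Rightarrow>\<^sub>L 'a"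
  assumes U: "open U" "x \<in> U" and D\<phi>: "\<forall>q\<in>U. (\<phi> has_derivative D\<phi> q) (at q)"
    and D\<phi>_cont: "continuous_on U D\<phi>"
    and UG: "open UG" "(x, 0) \<in> UG" and DG: "\<forall>q\<in>UG. (G has_derivative DG q) (at q)"
    and DG_cont: "continuous_on UG DG" and Gx0: "G (x, 0) = x"
    and P: "linear P" and DG_P: "\<And>h. DG (x, 0) (0, P h) = P h"
    and \<psi>': "linear \<psi>'" "\<forall>u. \<psi>' (D\<phi> x u) = u"
  obtains V g C where "open V" "\<phi> x \<in> V" "C > 0"
    "\<forall>w\<in>V. (x, P (g w)) \<in> UG \<and> G (x, P (g w)) \<in> U \<and>
       \<phi> (G (x, P (g w))) + D\<phi> x (g w - P (g w)) = w"
    "eventually (\<lambda>w. norm (g w) \<le> C * norm (w - \<phi> x)) (nhds (\<phi> x))"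
proof -
  define F where "F z = \<phi> (G (x, P z)) + D\<phi> x (z - P z)" for z
  obtain S and F' :: "'a \<Rightarrow> 'a \<Rightarrow>\<^sub>L 'a" where S: "open S" "0 \<in> S"
    and S_maps: "\<And>z. z \<in> S \<Longrightarrow> (x, P z) \<in> UG \<and> G (x, P z) \<in> U"
    and dF: "\<And>z. z \<in> S \<Longrightarrow> (F has_derivative F' z) (at z)"
    and F'_cont: "continuous_on S F'" and F'0: "F' 0 = D\<phi> x"
    using straightening_map_C1[OF U D\<phi> D\<phi>_cont UG DG DG_cont Gx0 P DG_P]
    unfolding F_def[abs_def] by blast
  have "Blinfun \<psi>' o\<^sub>L F' 0 = id_blinfun"
    using \<psi>'
    by (auto intro!: blinfun_eqI simp: F'0 bounded_linear_Blinfun_apply linear_conv_bounded_linear)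
  then obtain U' V g C where U': "U' \<subseteq> S" and V: "open V" "F 0 \<in> V"
    and hom: "homeomorphism U' V F g"
    and C: "C > 0" "eventually (\<lambda>w. norm (g w - 0) \<le> C * norm (w - F 0)) (nhds (F 0))"
    using local_inverse_lipschitz[OF S dF F'_cont] by blast
  have F0: "F 0 = \<phi> x" unfolding F_def using Gx0 linear_0[OF P] by simp
  show ?thesis
  proof (rule that)
    show "open V" "\<phi> x \<in> V" "C > 0" using V C F0 by simp_all
    show "eventually (\<lambda>w. norm (g w) \<le> C * norm (w - \<phi> x)) (nhds (\<phi> x))" using C(2) F0 by simp
    show "\<forall>w\<in>V. (x, P (g w)) \<in> UG \<and> G (x, P (g w)) \<in> U \<and>
        \<phi> (G (x, P (g w))) + D\<phi> x (g w - P (g w)) = w"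
    proof
      fix w assume "w \<in> V"
      then have "g w \<in> S" "F (g w) = w" using hom U' unfolding homeomorphism_def by blast+
      then show "(x, P (g w)) \<in> UG \<and> G (x, P (g w)) \<in> U \<and>
          \<phi> (G (x, P (g w))) + D\<phi> x (g w - P (g w)) = w"
        using S_maps unfolding F_def by blast
    qed
  qed
qed

lemma (in slice_chart) normal_correction_eq_0:
  assumes "linear \<phi>'" "\<forall>u. \<psi>' (\<phi>' u) = u" and "p \<in> M \<inter> U" "y \<in> M \<inter> U"
    and "\<phi> p + \<phi>' w = \<phi> y" and "\<forall>t\<in>\<psi>' ` L. w \<bullet> t = 0"
  shows "w = 0" "p = y"
proof -
  have "\<phi> p \<in> L" "\<phi> y \<in> L" using assms(3,4) slice by blast+
  then have "\<phi>' w \<in> L" using assms(5) subspace_diff[OF subspace_L] by (metis add_diff_cancel_left')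
  then have "w \<bullet> w = 0" using assms(2,6) by (metis image_eqI)
  then show "w = 0" by simp
  then have "\<phi> p = \<phi> y" using assms(1,5) by (simp add: linear_0)
  then show "p = y" using psi_phi assms(3,4) by (metis IntD2)
qed

text \<open>A \<open>C\<^sup>1\<close> map from the tangent space into \<open>M\<close> that is tangent to the identity at \<open>0\<close>
  covers a neighbourhood of \<open>x\<close> in \<open>M\<close>: in the chart, the straightening map inverts it.\<close>

lemma (in slice_chart) tangent_parametrization_locally_onto:
  fixes G :: "'a \<times> 'a \<Rightarrow> 'a" and DG :: "'a \<times> 'a \<Rightarrow> ('a \<times> 'a) \<Rightarrow>\<^sub>L 'a"
  assumes x: "x \<in> M \<inter> U" and UG: "open UG" "(x, 0) \<in> UG"
    and DG: "\<forall>q\<in>UG. (G has_derivative DG q) (at q)" and DG_cont: "continuous_on UG DG"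
    and Gx0: "G (x, 0) = x"
    and GM: "\<And>\<eta>. \<eta> \<in> tangent_space M x \<Longrightarrow> (x, \<eta>) \<in> UG \<Longrightarrow> G (x, \<eta>) \<in> M"
    and DG_T: "\<And>k. k \<in> tangent_space M x \<Longrightarrow> DG (x, 0) (0, k) = k"
  obtains C where "C > 0"
    "eventually (\<lambda>y. \<exists>\<eta>\<in>tangent_space M x. (x, \<eta>) \<in> UG \<and> G (x, \<eta>) = y \<and> norm \<eta> \<le> C * norm (y - x))
       (at x within M)"
proof -
  define T where "T = tangent_space M x"
  have xU: "x \<in> U" using x by simp
  obtain D\<phi> :: "'a \<Rightarrow> 'a \<Rightarrow>\<^sub>L 'a" where D\<phi>_cont: "continuous_on U D\<phi>"
    and D\<phi>: "\<forall>q\<in>U. (\<phi> has_derivative D\<phi> q) (at q)"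
    using Cinf_on_imp_C1[OF smooth_phi] by metis
  note d\<phi> = D\<phi>[rule_format, OF xU]
  obtain \<psi>' where \<psi>': "linear \<psi>'" "\<forall>u. \<psi>' (D\<phi> x u) = u" and T_eq: "T = \<psi>' ` L"
    unfolding T_def using tangent_space_chart_image[OF x d\<phi>] by blast
  have T: "subspace T" unfolding T_eq using linear_subspace_image[OF \<psi>'(1) subspace_L] .
  define P where "P = proj_onto T"
  have P_T: "P z \<in> T" and P_normal: "\<forall>t\<in>\<psi>' ` L. (z - P z) \<bullet> t = 0" for z
    unfolding P_def using proj_onto[OF T] T_eq by auto
  have P: "linear P" unfolding P_def by (rule linear_proj_onto[OF T])
  obtain V g C1 where V: "open V" "\<phi> x \<in> V" and C1: "C1 > 0"
    and g: "\<forall>w\<in>V. (x, P (g w)) \<in> UG \<and> G (x, P (g w)) \<in> U \<and>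
              \<phi> (G (x, P (g w))) + D\<phi> x (g w - P (g w)) = w"
    and g_lip: "eventually (\<lambda>w. norm (g w) \<le> C1 * norm (w - \<phi> x)) (nhds (\<phi> x))"
    by (rule straightening_map_local_inverse[OF open_U xU D\<phi> D\<phi>_cont UG DG DG_cont Gx0 P
        DG_T[folded T_def, OF P_T] \<psi>']) (rule that)
  obtain C2 where C2: "C2 > 0" "eventually (\<lambda>y. norm (\<phi> y - \<phi> x) \<le> C2 * norm (y - x)) (nhds x)"
    by (rule has_derivative_imp_locally_lipschitz[OF d\<phi>])
  have \<phi>_lim: "filterlim \<phi> (nhds (\<phi> x)) (nhds x)"
    using has_derivative_continuous[OF d\<phi>] by (simp add: isCont_def tendsto_at_iff_tendsto_nhds)
  have "eventually (\<lambda>y. y \<in> U) (nhds x)" using open_U xU by (rule eventually_nhds_in_open)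
  moreover have "eventually (\<lambda>y. \<phi> y \<in> V) (nhds x)"
    using eventually_compose_filterlim[OF eventually_nhds_in_open[OF V] \<phi>_lim] .
  moreover have "eventually (\<lambda>y. norm (g (\<phi> y)) \<le> C1 * norm (\<phi> y - \<phi> x)) (nhds x)"
    using eventually_compose_filterlim[OF g_lip \<phi>_lim] .
  ultimately have "eventually (\<lambda>y. y \<in> M \<longrightarrow>
      (\<exists>\<eta>\<in>T. (x, \<eta>) \<in> UG \<and> G (x, \<eta>) = y \<and> norm \<eta> \<le> (C1 * C2) * norm (y - x))) (nhds x)"
    using C2(2)
  proof eventually_elim
    case (elim y)
    show ?case
    proof
      assume "y \<in> M"
      then have y: "y \<in> M \<inter> U" using elim(1) by simp
      define z where "z = g (\<phi> y)"
      have z: "(x, P z) \<in> UG" "G (x, P z) \<in> U" "\<phi> (G (x, P z)) + D\<phi> x (z - P z) = \<phi> y"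
        using g elim(2) unfolding z_def by blast+
      then have "G (x, P z) \<in> M \<inter> U" using GM[folded T_def, OF P_T] by simp
      from normal_correction_eq_0[OF has_derivative_linear[OF d\<phi>] \<psi>'(2) this y z(3) P_normal]
      have "P z = z" "G (x, P z) = y" by simp_all
      moreover have "norm z \<le> (C1 * C2) * norm (y - x)"
        unfolding z_def using order_trans[OF elim(3) mult_left_mono[OF elim(4)]] C1
        by (simp add: mult.assoc)
      ultimately show "\<exists>\<eta>\<in>T. (x, \<eta>) \<in> UG \<and> G (x, \<eta>) = y \<and> norm \<eta> \<le> (C1 * C2) * norm (y - x)"
        using P_T[of z] z(1) by (intro bexI[of _ z]) auto
    qed
  qed
  then have "eventually (\<lambda>y. \<exists>\<eta>\<in>T. (x, \<eta>) \<in> UG \<and> G (x, \<eta>) = y \<and> norm \<eta> \<le> (C1 * C2) * norm (y - x))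
      (at x within M)"
    unfolding eventually_at_filter by (rule eventually_mono) simp
  with C1 C2(1) show ?thesis unfolding T_def by (intro that[of "C1 * C2"]) simp_all
qed

lemma retraction_locally_onto:
  fixes M :: "'a::euclidean_space set" and R :: "'a \<times> 'a \<Rightarrow> 'a"
  assumes M: "embedded_submanifold M" and x: "x \<in> M" and R: "riem_retraction M R"
  obtains C where "C > 0"
    "eventually (\<lambda>y. \<exists>\<eta>\<in>tangent_space M x. R (x, \<eta>) = y \<and> norm \<eta> \<le> C * norm (y - x)) (at x within M)"
proof -
  define T where "T = tangent_space M x"
  obtain U W \<phi> \<psi> L where chart: "slice_chart M U W \<phi> \<psi> L" and xU: "x \<in> U"
    using embedded_submanifold_slice_chart[OF M x] .
  have T: "subspace T" unfolding T_def by (rule subspace_tangent_space[OF M x])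
  have TB: "(x, \<eta>) \<in> tangent_bundle M" if "\<eta> \<in> T" for \<eta>
    using that x unfolding tangent_bundle_def T_def by simp
  have R0: "R (x, 0) = x" and dR: "((\<lambda>\<eta>. R (x, \<eta>)) has_derivative id) (at 0 within T)"
    and RM: "\<And>\<eta>. \<eta> \<in> T \<Longrightarrow> R (x, \<eta>) \<in> M"
    using R x TB unfolding riem_retraction_def T_def by auto
  obtain UG and G :: "'a \<times> 'a \<Rightarrow> 'a" where UG: "open UG" "(x, 0) \<in> UG" and smooth_G: "Cinf_on UG G"
    and GR: "\<forall>q\<in>UG \<inter> tangent_bundle M. G q = R q"
    using R TB[OF subspace_0[OF T]] unfolding riem_retraction_def smooth_map_on_def by blast
  have GR_T: "G (x, \<eta>) = R (x, \<eta>)" if "\<eta> \<in> T" "(x, \<eta>) \<in> UG" for \<eta>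
    using GR TB that by blast
  obtain DG :: "'a \<times> 'a \<Rightarrow> ('a \<times> 'a) \<Rightarrow>\<^sub>L 'a" where DG_cont: "continuous_on UG DG"
    and DG: "\<forall>q\<in>UG. (G has_derivative DG q) (at q)"
    using Cinf_on_imp_C1[OF smooth_G] by metis
  have Gx0: "G (x, 0) = x" using GR_T[OF subspace_0[OF T] UG(2)] R0 by simp
  have GM: "G (x, \<eta>) \<in> M" if "\<eta> \<in> T" "(x, \<eta>) \<in> UG" for \<eta>
    using GR_T[OF that] RM[OF that(1)] by simp
  have DG_T: "DG (x, 0) (0, k) = k" if "k \<in> T" for k
    using smooth_extension_derivative[OF UG DG[rule_format, OF UG(2)] GR_T dR T that] by simp
  have "x \<in> M \<inter> U" using x xU by simp
  from slice_chart.tangent_parametrization_locally_onto[OF chart this UG DG DG_cont Gx0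
      GM[unfolded T_def] DG_T[unfolded T_def]]
  obtain C where "C > 0" and onto: "eventually (\<lambda>y. \<exists>\<eta>\<in>T. (x, \<eta>) \<in> UG \<and> G (x, \<eta>) = y \<and>
      norm \<eta> \<le> C * norm (y - x)) (at x within M)"
    unfolding T_def by blast
  have "eventually (\<lambda>y. \<exists>\<eta>\<in>T. R (x, \<eta>) = y \<and> norm \<eta> \<le> C * norm (y - x)) (at x within M)"
    using onto
  proof (rule eventually_mono)
    fix y assume "\<exists>\<eta>\<in>T. (x, \<eta>) \<in> UG \<and> G (x, \<eta>) = y \<and> norm \<eta> \<le> C * norm (y - x)"
    then obtain \<eta> where "\<eta> \<in> T" "(x, \<eta>) \<in> UG" "G (x, \<eta>) = y" "norm \<eta> \<le> C * norm (y - x)" by blast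
    then show "\<exists>\<eta>\<in>T. R (x, \<eta>) = y \<and> norm \<eta> \<le> C * norm (y - x)" using GR_T by metis
  qed
  with \<open>C > 0\<close> show ?thesis unfolding T_def by (rule that)
qed

section \<open>A radial \<open>C\<^sup>1\<close> majorant of a little-o function\<close>

lemma little_o_modulus:
  fixes q :: "'a::real_normed_vector \<Rightarrow> real"
  assumes q: "\<forall>c>0. \<exists>\<delta>>0. \<forall>y\<in>S. norm (y - x) < \<delta> \<longrightarrow> q y \<le> c * norm (y - x)"
  obtains a e where "a > 0" "mono e" "\<And>t. 0 \<le> e t" "\<forall>c>0. \<exists>\<delta>>0. \<forall>t. 0 < t \<and> t < \<delta> \<longrightarrow> e t \<le> c"
    "\<And>y. y \<in> S \<Longrightarrow> norm (y - x) \<le> a \<Longrightarrow> q y \<le> norm (y - x) * e (norm (y - x))"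
proof -
  obtain \<delta>1 where \<delta>1: "\<delta>1 > 0" "\<forall>y\<in>S. norm (y - x) < \<delta>1 \<longrightarrow> q y \<le> 1 * norm (y - x)"
    using q zero_less_one by blast
  define a where "a = \<delta>1 / 2"
  have a: "a > 0" "a < \<delta>1" using \<delta>1 by (auto simp: a_def)
  text \<open>\<open>e t\<close> is the least admissible slope of \<open>q\<close> at distances at most \<open>t\<close>; the cap \<open>a\<close>
    keeps the supremum bounded by \<open>1\<close>.\<close>
  define Q where "Q t = {q y / norm (y - x) | y. y \<in> S \<and> 0 < norm (y - x) \<and> norm (y - x) \<le> min t a}"
    for t
  define e where "e t = Sup (insert 0 (Q t))" for t
  have "z \<le> 1" if z: "z \<in> Q t" for z t
  proof -
    obtain y where y: "z = q y / norm (y - x)" "y \<in> S" "0 < norm (y - x)" "norm (y - x) \<le> min t a"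
      using z unfolding Q_def by blast
    then have "q y \<le> norm (y - x)" using \<delta>1 a by auto
    then show ?thesis using y by (simp add: divide_le_eq)
  qed
  then have bdd: "bdd_above (insert 0 (Q t))" for t
    unfolding bdd_above_def by (intro exI[of _ 1]) auto
  have e0: "0 \<le> e t" for t unfolding e_def by (rule cSup_upper[OF _ bdd]) simp
  have "mono e"
  proof (rule monoI)
    fix s t :: real assume "s \<le> t"
    then have "Q s \<subseteq> Q t" unfolding Q_def by fastforce
    then show "e s \<le> e t" unfolding e_def by (intro cSup_subset_mono bdd) auto
  qed
  moreover have "\<forall>c>0. \<exists>\<delta>>0. \<forall>t. 0 < t \<and> t < \<delta> \<longrightarrow> e t \<le> c"
  proof (intro allI impI)
    fix c :: real assume c: "c > 0"
    obtain \<delta> where \<delta>: "\<delta> > 0" "\<forall>y\<in>S. norm (y - x) < \<delta> \<longrightarrow> q y \<le> c * norm (y - x)"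
      using q c by blast
    have "e t \<le> c" if t: "0 < t" "t < \<delta>" for t
      unfolding e_def
    proof (rule cSup_least)
      fix z assume "z \<in> insert 0 (Q t)"
      then show "z \<le> c"
      proof
        assume "z \<in> Q t"
        then obtain y where
          y: "z = q y / norm (y - x)" "y \<in> S" "0 < norm (y - x)" "norm (y - x) \<le> min t a"
          unfolding Q_def by blast
        then have "q y \<le> c * norm (y - x)" using \<delta> t by auto
        then show ?thesis using y by (simp add: divide_le_eq)
      qed (use c in simp)
    qed simp
    then show "\<exists>\<delta>>0. \<forall>t. 0 < t \<and> t < \<delta> \<longrightarrow> e t \<le> c" using \<delta> by blast
  qed
  moreover have "q y \<le> norm (y - x) * e (norm (y - x))" if y: "y \<in> S" "norm (y - x) \<le> a" for y
  proof (cases "y = x")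
    case True
    then show ?thesis using \<delta>1 y by auto
  next
    case False
    then have "q y / norm (y - x) \<in> Q (norm (y - x))" unfolding Q_def using y by auto
    then have "q y / norm (y - x) \<le> e (norm (y - x))" unfolding e_def by (intro cSup_upper bdd) auto
    then show ?thesis using False by (simp add: divide_le_eq mult.commute)
  qed
  ultimately show ?thesis using that a(1) e0 by blast
qed

lemma mono_fun_integral_bounds:
  fixes e :: "real \<Rightarrow> real"
  assumes mono: "mono e" and "a \<le> b"
  shows "(b - a) * e a \<le> integral {a..b} e" "integral {a..b} e \<le> (b - a) * e b"
proof -
  have ie: "e integrable_on {a..b}"
    by (rule integrable_on_mono_on) (use mono in \<open>auto simp: mono_on_def mono_def\<close>)
  have "integral {a..b} (\<lambda>_. e a) \<le> integral {a..b} e"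
    by (rule integral_le[OF _ ie]) (use mono in \<open>auto simp: mono_def\<close>)
  then show "(b - a) * e a \<le> integral {a..b} e" using assms(2) by (simp add: content_real)
  have "integral {a..b} e \<le> integral {a..b} (\<lambda>_. e b)"
    by (rule integral_le[OF ie]) (use mono in \<open>auto simp: mono_def\<close>)
  then show "integral {a..b} e \<le> (b - a) * e b" using assms(2) by (simp add: content_real)
qed

lemma continuous_on_zero_extension:
  fixes h :: "real \<Rightarrow> real"
  assumes h: "continuous_on {0<..A} h"
    and h_small: "\<forall>c>0. \<exists>\<delta>>0. \<forall>s. 0 < s \<and> s < \<delta> \<longrightarrow> \<bar>h s\<bar> \<le> c"
  shows "continuous_on {0..A} (\<lambda>s. if s \<le> 0 then 0 else h s)"
  unfolding continuous_on_iff
proof (intro ballI allI impI)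
  fix s0 \<epsilon> :: real assume s0: "s0 \<in> {0..A}" and \<epsilon>: "\<epsilon> > 0"
  let ?h = "\<lambda>s. if s \<le> 0 then 0 else h s"
  show "\<exists>\<delta>>0. \<forall>s\<in>{0..A}. dist s s0 < \<delta> \<longrightarrow> dist (?h s) (?h s0) < \<epsilon>"
  proof (cases "s0 = 0")
    case True
    obtain \<delta> where \<delta>: "\<delta> > 0" "\<forall>s. 0 < s \<and> s < \<delta> \<longrightarrow> \<bar>h s\<bar> \<le> \<epsilon> / 2"
      using h_small \<epsilon> half_gt_zero by blast
    have "dist (?h s) (?h s0) < \<epsilon>" if "dist s s0 < \<delta>" for s
      using that True \<delta>(2)[rule_format, of s] \<epsilon> by (auto simp: dist_real_def)
    then show ?thesis using \<delta>(1) by blast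
  next
    case False
    then have s0: "s0 \<in> {0<..A}" using s0 by auto
    obtain d where d: "d > 0" "\<forall>s\<in>{0<..A}. dist s s0 < d \<longrightarrow> dist (h s) (h s0) < \<epsilon>"
      using h s0 \<epsilon> unfolding continuous_on_iff by blast
    have "dist (?h s) (?h s0) < \<epsilon>" if "s \<in> {0..A}" "dist s s0 < min d s0" for s
    proof -
      have "s > 0" using that by (simp add: dist_real_def abs_if split: if_splits)
      then show ?thesis using d that s0 by simp
    qed
    then show ?thesis using d(1) s0 by (intro exI[of _ "min d s0"]) auto
  qed
qed

text \<open>A monotone modulus need not be continuous; averaging it over \<open>[0, 4 s]\<close> gives a continuous
  function squeezed between \<open>2 e (2 s)\<close> and \<open>4 e (4 s)\<close>.\<close>

lemma continuous_average_above_modulus: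
  fixes e :: "real \<Rightarrow> real"
  assumes mono: "mono e" and e0: "\<And>t. 0 \<le> e t"
    and e_small: "\<forall>c>0. \<exists>\<delta>>0. \<forall>t. 0 < t \<and> t < \<delta> \<longrightarrow> e t \<le> c" and A: "A > 0"
  obtains m where "continuous_on {0..A} m" "m 0 = 0" "\<And>s. 0 < s \<Longrightarrow> 2 * e (2 * s) \<le> m s"
proof -
  define F where "F t = integral {0..t} e" for t
  have ie: "e integrable_on {a..b}" for a b
    by (rule integrable_on_mono_on) (use mono in \<open>auto simp: mono_on_def mono_def\<close>)
  have bounds: "2 * e (2 * s) \<le> F (4 * s) / s \<and> F (4 * s) / s \<le> 4 * e (4 * s)" if s: "s > 0" for s
  proof -
    have "integral {0..2 * s} e + integral {2 * s..4 * s} e = F (4 * s)"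
      unfolding F_def by (rule Henstock_Kurzweil_Integration.integral_combine) (use s ie in auto)
    moreover have "0 \<le> integral {0..2 * s} e" by (rule integral_nonneg) (use ie e0 in auto)
    moreover have "(4 * s - 2 * s) * e (2 * s) \<le> integral {2 * s..4 * s} e"
      using mono_fun_integral_bounds[OF mono, of "2 * s" "4 * s"] s by simp
    ultimately have "2 * s * e (2 * s) \<le> F (4 * s)" by simp
    moreover have "F (4 * s) \<le> (4 * s - 0) * e (4 * s)"
      unfolding F_def using mono_fun_integral_bounds[OF mono, of 0 "4 * s"] s by simp
    ultimately show ?thesis using s by (simp add: field_simps)
  qed
  have small: "\<forall>c>0. \<exists>\<delta>>0. \<forall>s. 0 < s \<and> s < \<delta> \<longrightarrow> \<bar>F (4 * s) / s\<bar> \<le> c"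
  proof (intro allI impI)
    fix c :: real assume "c > 0"
    then have "c / 4 > 0" by simp
    then obtain \<delta> where \<delta>: "\<delta> > 0" "\<forall>t. 0 < t \<and> t < \<delta> \<longrightarrow> e t \<le> c / 4" using e_small by blast
    have "\<bar>F (4 * s) / s\<bar> \<le> c" if "0 < s" "s < \<delta> / 4" for s
      using bounds[OF that(1)] \<delta>(2)[rule_format, of "4 * s"] e0[of "2 * s"] that by auto
    then show "\<exists>\<delta>>0. \<forall>s. 0 < s \<and> s < \<delta> \<longrightarrow> \<bar>F (4 * s) / s\<bar> \<le> c"
      using \<delta>(1) by (intro exI[of _ "\<delta> / 4"]) auto
  qed
  have F_cont: "continuous_on {0..4 * A} F" unfolding F_def
    by (rule indefinite_integral_continuous_1[OF ie])
  have "continuous_on {0<..A} (\<lambda>s. F (4 * s) / s)"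
    by (intro continuous_on_divide continuous_on_id continuous_on_compose2[OF F_cont])
      (auto intro!: continuous_intros)
  from continuous_on_zero_extension[OF this small] show ?thesis
    by (rule that) (use bounds in auto)
qed

lemma C1_profile_above_modulus:
  fixes e :: "real \<Rightarrow> real"
  assumes mono: "mono e" and e0: "\<And>t. 0 \<le> e t"
    and e_small: "\<forall>c>0. \<exists>\<delta>>0. \<forall>t. 0 < t \<and> t < \<delta> \<longrightarrow> e t \<le> c" and A: "A > 0"
  obtains m k where "continuous_on {0..A} m" "m 0 = 0"
    "\<And>t. t \<in> {0..A} \<Longrightarrow> (k has_real_derivative m t) (at t within {0..A})" "k 0 = 0"
    "\<And>t. t \<in> {0..A} \<Longrightarrow> t * e t \<le> k t"
proof -
  obtain m where m_cont: "continuous_on {0..A} m" and m0: "m 0 = 0"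
    and m_above: "\<And>s. 0 < s \<Longrightarrow> 2 * e (2 * s) \<le> m s"
    using continuous_average_above_modulus[OF assms] by blast
  have m_nonneg: "0 \<le> m s" if "0 \<le> s" for s
    using that m_above[of s] e0[of "2 * s"] m0 by (cases "s = 0") auto
  define k where "k t = integral {0..t} m" for t
  have m_int: "m integrable_on {a..b}" if "0 \<le> a" "b \<le> A" for a b
    by (rule integrable_continuous_real, rule continuous_on_subset[OF m_cont]) (use that in auto)
  have "t * e t \<le> k t" if t: "t \<in> {0..A}" for t
  proof (cases "t > 0")
    case True
    have "integral {0..t/2} m + integral {t/2..t} m = k t"
      unfolding k_def
      by (rule Henstock_Kurzweil_Integration.integral_combine) (use True t m_int in auto)
    moreover have "0 \<le> integral {0..t/2} m"
      by (rule integral_nonneg) (use True t m_int m_nonneg in auto)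
    moreover have "integral {t/2..t} (\<lambda>_. 2 * e t) \<le> integral {t/2..t} m"
    proof (rule integral_le)
      show "m integrable_on {t/2..t}" using m_int True t by auto
      fix s assume s: "s \<in> {t/2..t}"
      then have "e t \<le> e (2 * s)" using mono by (auto simp: mono_def)
      then show "2 * e t \<le> m s" using m_above[of s] s True by auto
    qed (rule integrable_const_ivl)
    moreover have "integral {t/2..t} (\<lambda>_. 2 * e t) = t * e t" using True by (simp add: content_real)
    ultimately show ?thesis by linarith
  qed (use t in \<open>simp add: k_def\<close>)
  moreover have "\<And>t. t \<in> {0..A} \<Longrightarrow> (k has_real_derivative m t) (at t within {0..A})"
    unfolding k_def[abs_def] using integral_has_real_derivative[OF m_cont] by blast
  moreover have "k 0 = 0" by (simp add: k_def)
  ultimately show ?thesis using that m_cont m0 by blast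
qed

lemma filterlim_norm_diff_at:
  fixes x :: "'a::real_normed_vector"
  assumes "A > 0"
  shows "filterlim (\<lambda>z. norm (z - x)) (at 0 within {0..A}) (at x)"
proof -
  have "((\<lambda>z. norm (z - x)) \<longlongrightarrow> 0) (at x)"
    by (intro tendsto_norm_zero LIM_zero tendsto_ident_at)
  moreover have "eventually (\<lambda>z. norm (z - x) \<in> {0..A} \<and> norm (z - x) \<noteq> 0) (at x)"
    unfolding eventually_at using assms by (intro exI[of _ A]) (auto simp: dist_norm)
  ultimately show ?thesis by (simp add: filterlim_at)
qed

lemma has_derivative_radial:
  fixes x :: "'a::euclidean_space" and m k :: "real \<Rightarrow> real"
  assumes m0: "m 0 = 0"
    and dk: "\<And>t. t \<in> {0..A} \<Longrightarrow> (k has_real_derivative m t) (at t within {0..A})" and k0: "k 0 = 0"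
    and y: "y \<in> ball x A"
  shows "((\<lambda>y. k (norm (y - x))) has_derivative
           (\<lambda>u. ((m (norm (y - x)) / norm (y - x)) *\<^sub>R (y - x)) \<bullet> u)) (at y)"
proof (cases "y = x")
  case False
  define t where "t = norm (y - x)"
  have t: "0 < t" "t < A" using False y by (auto simp: t_def dist_norm norm_minus_commute)
  have "(k has_real_derivative m t) (at t)"
    using dk[of t] t at_within_interior[of t "{0..A}"] by simp
  then have dk_t: "(k has_derivative (\<lambda>s. m t * s)) (at (norm (y - x)))"
    unfolding has_field_derivative_def t_def by simp
  have "(norm has_derivative (\<lambda>h. h \<bullet> sgn (y - x))) (at (y - x))"
    using has_derivative_norm[of "y - x"] False by (simp add: inner_commute)
  then have "((\<lambda>y. norm (y - x)) has_derivative (\<lambda>u. u \<bullet> sgn (y - x))) (at y)"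
    using has_derivative_compose[OF has_derivative_diff[OF has_derivative_ident has_derivative_const]]
    by simp
  from has_derivative_compose[OF this dk_t] show ?thesis
    by (rule has_derivative_eq_rhs)
      (auto simp: fun_eq_iff t_def sgn_div_norm inner_commute divide_inverse)
next
  case True
  have A: "A > 0" using y True by simp
  have "(k has_real_derivative 0) (at 0 within {0..A})" using dk[of 0] A m0 by simp
  then have "((\<lambda>t. k t / t) \<longlongrightarrow> 0) (at 0 within {0..A})"
    using k0 by (simp add: has_field_derivative_iff)
  from filterlim_compose[OF this filterlim_norm_diff_at[OF A, of 0]]
  have "((\<lambda>h. \<bar>k (norm h)\<bar> / norm h) \<longlongrightarrow> 0) (at 0)"
    using tendsto_rabs_zero by (fastforce simp: abs_divide)
  then have "((\<lambda>y. k (norm (y - x))) has_derivative (\<lambda>u. 0)) (at x)"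
    unfolding has_derivative_at using k0 by simp
  then show ?thesis using True by simp
qed

lemma continuous_on_radial_gradient:
  fixes x :: "'a::euclidean_space" and m :: "real \<Rightarrow> real"
  assumes m: "continuous_on {0..A} m" "m 0 = 0"
  shows "continuous_on (ball x A) (\<lambda>y. (m (norm (y - x)) / norm (y - x)) *\<^sub>R (y - x))"
proof (rule continuous_at_imp_continuous_on, intro ballI)
  fix y assume y: "y \<in> ball x A"
  show "isCont (\<lambda>y. (m (norm (y - x)) / norm (y - x)) *\<^sub>R (y - x)) y"
  proof (cases "y = x")
    case False
    have "norm (y - x) \<in> interior {0..A}"
      using False y by (simp add: dist_norm norm_minus_commute)
    then have "isCont m (norm (y - x))" using continuous_on_interior[OF m(1)] by blast
    then have "isCont (\<lambda>y. m (norm (y - x))) y"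
      by (rule continuous_at_compose[unfolded o_def, rotated]) (intro continuous_intros)
    then show ?thesis using False by (intro continuous_intros) auto
  next
    case True
    have A: "A > 0" using y True by simp
    have "(m \<longlongrightarrow> 0) (at 0 within {0..A})"
      using bspec[OF m(1)[unfolded continuous_on_def], of 0] A m(2) by simp
    from filterlim_compose[OF this filterlim_norm_diff_at[OF A, of x]]
    have "((\<lambda>z. \<bar>m (norm (z - x))\<bar>) \<longlongrightarrow> 0) (at x)" by (rule tendsto_rabs_zero)
    moreover have "eventually (\<lambda>z.
        \<bar>m (norm (z - x))\<bar> = norm ((m (norm (z - x)) / norm (z - x)) *\<^sub>R (z - x))) (at x)"
      unfolding eventually_at_filter by (rule always_eventually) (auto simp: abs_divide)
    ultimately have "((\<lambda>z. norm ((m (norm (z - x)) / norm (z - x)) *\<^sub>R (z - x))) \<longlongrightarrow> 0) (at x)"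
      by (rule Lim_transform_eventually)
    then have "((\<lambda>z. (m (norm (z - x)) / norm (z - x)) *\<^sub>R (z - x)) \<longlongrightarrow> 0) (at x)"
      by (rule tendsto_norm_zero_cancel)
    then show ?thesis using True by (simp add: isCont_def)
  qed
qed

lemma C1_majorant:
  fixes q :: "'a::euclidean_space \<Rightarrow> real"
  assumes "\<forall>c>0. \<exists>\<delta>>0. \<forall>y\<in>S. norm (y - x) < \<delta> \<longrightarrow> q y \<le> c * norm (y - x)"
  obtains \<delta> K DK where "\<delta> > 0" "\<And>y. y \<in> cball x \<delta> \<Longrightarrow> (K has_derivative (\<lambda>u. DK y \<bullet> u)) (at y)"
    "continuous_on (cball x \<delta>) DK" "DK x = 0" "K x = 0"
    "\<And>y. y \<in> S \<Longrightarrow> norm (y - x) < \<delta> \<Longrightarrow> q y \<le> K y"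
proof -
  obtain a e where a: "a > 0"
    and e: "mono e" "\<And>t. 0 \<le> e t" "\<forall>c>0. \<exists>\<delta>>0. \<forall>t. 0 < t \<and> t < \<delta> \<longrightarrow> e t \<le> c"
    and q_e: "\<And>y. y \<in> S \<Longrightarrow> norm (y - x) \<le> a \<Longrightarrow> q y \<le> norm (y - x) * e (norm (y - x))"
    using little_o_modulus[OF assms] by blast
  obtain m k where m: "continuous_on {0..a} m" "m 0 = 0"
    and dk: "\<And>t. t \<in> {0..a} \<Longrightarrow> (k has_real_derivative m t) (at t within {0..a})" and k0: "k 0 = 0"
    and k_e: "\<And>t. t \<in> {0..a} \<Longrightarrow> t * e t \<le> k t"
    using C1_profile_above_modulus[OF e a] by blast
  define K where "K y = k (norm (y - x))" for y
  define DK where "DK y = (m (norm (y - x)) / norm (y - x)) *\<^sub>R (y - x)" for y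
  have ball: "cball x (a / 2) \<subseteq> ball x a" using a by (auto simp: subset_eq)
  show ?thesis
  proof (rule that[of "a / 2" K DK])
    show "(K has_derivative (\<lambda>u. DK y \<bullet> u)) (at y)" if "y \<in> cball x (a / 2)" for y
      unfolding K_def DK_def using has_derivative_radial[OF m(2) dk k0] that ball by blast
    show "continuous_on (cball x (a / 2)) DK"
      unfolding DK_def by (rule continuous_on_subset[OF continuous_on_radial_gradient[OF m] ball])
    show "q y \<le> K y" if "y \<in> S" "norm (y - x) < a / 2" for y
      using q_e[OF that(1)] k_e[of "norm (y - x)"] that a unfolding K_def by force
  qed (use a k0 in \<open>simp_all add: K_def DK_def\<close>)
qed

section \<open>The Riemannian Frechet subdifferential along a retraction\<close>

lemma riem_frechet_subdiff_imp_expansion: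
  fixes M :: "'a::euclidean_space set" and R :: "'a \<times> 'a \<Rightarrow> 'a"
  assumes M: "embedded_submanifold M" and x: "x \<in> M" and R: "riem_retraction M R"
    and v: "v \<in> riem_frechet_subdiff M f x"
  shows "v \<in> tangent_space M x \<and>
     (\<exists>r. r \<in> o[at 0 within tangent_space M x](\<lambda>\<eta>. norm \<eta>) \<and>
        (\<forall>\<eta>\<in>tangent_space M x. f (R (x, \<eta>)) \<ge> f (R (x, 0)) + v \<bullet> \<eta> + r \<eta>))"
proof -
  define T where "T = tangent_space M x"
  have T: "subspace T" unfolding T_def by (rule subspace_tangent_space[OF M x])
  have R0: "R (x, 0) = x" and dR: "((\<lambda>\<eta>. R (x, \<eta>)) has_derivative id) (at 0 within T)"
    and RM: "\<And>\<eta>. \<eta> \<in> T \<Longrightarrow> R (x, \<eta>) \<in> M"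
    using R x unfolding riem_retraction_def T_def tangent_bundle_def by auto
  obtain g h \<delta> \<epsilon> where v_def: "v = proj_onto T (g x)" and \<delta>: "\<delta> > 0"
    and dh: "\<forall>y\<in>cball x \<delta>. (h has_derivative (\<lambda>u. g y \<bullet> u)) (at y)"
    and \<epsilon>: "\<epsilon> > 0" and min: "\<forall>y\<in>M. dist y x < \<epsilon> \<longrightarrow> f x - h x \<le> f y - h y"
    using v unfolding riem_frechet_subdiff_def T_def by blast
  have vT: "v \<in> T" and normal: "\<forall>t\<in>T. (g x - v) \<bullet> t = 0"
    using proj_onto[OF T, of "g x"] v_def by auto
  define r where "r \<eta> = min 0 (f (R (x, \<eta>)) - f (R (x, 0)) - v \<bullet> \<eta>)" for \<eta>
  have "r \<in> o[at 0 within T](\<lambda>\<eta>. norm \<eta>)"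
    unfolding smallo_def
  proof (intro CollectI allI impI)
    fix c :: real assume c: "c > 0"
    have "(h has_derivative (\<lambda>u. g x \<bullet> u)) (at (R (x, 0)))" using dh \<delta> R0 by simp
    from has_derivative_compose[OF dR this]
    have "((\<lambda>\<eta>. h (R (x, \<eta>))) has_derivative (\<lambda>\<eta>. g x \<bullet> \<eta>)) (at 0 within T)" by simp
    then have "eventually (\<lambda>\<eta>. norm (h (R (x, \<eta>)) - h x - g x \<bullet> \<eta>) \<le> c * norm \<eta>) (at 0 within T)"
      using c R0 by (simp add: has_derivative_within_alt2)
    moreover
    have "continuous (at 0 within T) (\<lambda>\<eta>. R (x, \<eta>))" using dR by (rule has_derivative_continuous)
    then have "((\<lambda>\<eta>. R (x, \<eta>)) \<longlongrightarrow> x) (at 0 within T)" using R0 by (simp add: continuous_within)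
    then have "eventually (\<lambda>\<eta>. dist (R (x, \<eta>)) x < \<epsilon>) (at 0 within T)"
      using \<epsilon> by (rule tendstoD)
    moreover have "eventually (\<lambda>\<eta>. \<eta> \<in> T) (at 0 within T)" unfolding eventually_at_filter by simp
    ultimately show "eventually (\<lambda>\<eta>. norm (r \<eta>) \<le> c * norm (norm \<eta>)) (at 0 within T)"
    proof eventually_elim
      case (elim \<eta>)
      have "f x - h x \<le> f (R (x, \<eta>)) - h (R (x, \<eta>))" using min RM elim(2,3) by blast
      moreover have "g x \<bullet> \<eta> = v \<bullet> \<eta>" using normal elim(3) by (simp add: inner_diff_left)
      ultimately have "- (c * norm \<eta>) \<le> f (R (x, \<eta>)) - f (R (x, 0)) - v \<bullet> \<eta>"
        using elim(1) R0 by (simp add: abs_le_iff)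
      then show ?case unfolding r_def using c by (simp add: abs_if min_def)
    qed
  qed
  moreover have "\<forall>\<eta>\<in>T. f (R (x, \<eta>)) \<ge> f (R (x, 0)) + v \<bullet> \<eta> + r \<eta>"
    unfolding r_def by auto
  ultimately show ?thesis using vT unfolding T_def by blast
qed

lemma expansion_imp_lower_bound_on_manifold:
  fixes M :: "'a::euclidean_space set" and R :: "'a \<times> 'a \<Rightarrow> 'a"
  assumes M: "embedded_submanifold M" and x: "x \<in> M" and R: "riem_retraction M R"
    and r: "r \<in> o[at 0 within tangent_space M x](\<lambda>\<eta>. norm \<eta>)"
    and expansion: "\<forall>\<eta>\<in>tangent_space M x. f (R (x, \<eta>)) \<ge> f (R (x, 0)) + v \<bullet> \<eta> + r \<eta>"
  shows "\<forall>c>0. \<exists>\<delta>>0. \<forall>y\<in>M. norm (y - x) < \<delta> \<longrightarrow> f x + v \<bullet> (y - x) - f y \<le> c * norm (y - x)"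
proof (intro allI impI)
  fix c :: real assume c: "c > 0"
  define T where "T = tangent_space M x"
  have R0: "R (x, 0) = x" and dR: "((\<lambda>\<eta>. R (x, \<eta>)) has_derivative id) (at 0 within T)"
    using R x unfolding riem_retraction_def T_def by auto
  obtain C where C: "C > 0"
    and onto: "eventually (\<lambda>y. \<exists>\<eta>\<in>T. R (x, \<eta>) = y \<and> norm \<eta> \<le> C * norm (y - x)) (at x within M)"
    using retraction_locally_onto[OF M x R] unfolding T_def by blast
  define c' where "c' = c / (C * (norm v + 1))"
  have c': "c' > 0" using c C by (simp add: c'_def add_nonneg_pos)
  have "eventually (\<lambda>\<eta>. norm (r \<eta>) \<le> c' * norm (norm \<eta>)) (at 0 within T)"
    using r c' unfolding smallo_def T_def by blast
  moreover have "eventually (\<lambda>\<eta>. norm (R (x, \<eta>) - x - \<eta>) \<le> c' * norm \<eta>) (at 0 within T)"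
    using dR c' R0 by (simp add: has_derivative_within_alt2)
  moreover have "eventually (\<lambda>\<eta>. \<eta> \<in> T) (at 0 within T)" unfolding eventually_at_filter by simp
  ultimately have "eventually (\<lambda>\<eta>. f (R (x, \<eta>)) \<ge> f x + v \<bullet> \<eta> - c' * norm \<eta> \<and>
      norm (R (x, \<eta>) - x - \<eta>) \<le> c' * norm \<eta>) (at 0 within T)"
  proof eventually_elim
    case (elim \<eta>)
    then show ?case using expansion R0 unfolding T_def by force
  qed
  then obtain \<sigma> where \<sigma>: "\<sigma> > 0" "\<And>\<eta>. \<eta> \<in> T \<Longrightarrow> \<eta> \<noteq> 0 \<Longrightarrow> dist \<eta> 0 < \<sigma> \<Longrightarrow>
      f (R (x, \<eta>)) \<ge> f x + v \<bullet> \<eta> - c' * norm \<eta> \<and> norm (R (x, \<eta>) - x - \<eta>) \<le> c' * norm \<eta>"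
    unfolding eventually_at by blast
  obtain \<delta> where \<delta>: "\<delta> > 0" "\<And>y. y \<in> M \<Longrightarrow> y \<noteq> x \<Longrightarrow> dist y x < \<delta> \<Longrightarrow>
      \<exists>\<eta>\<in>T. R (x, \<eta>) = y \<and> norm \<eta> \<le> C * norm (y - x)"
    using onto unfolding eventually_at by blast
  have "f x + v \<bullet> (y - x) - f y \<le> c * norm (y - x)"
    if y: "y \<in> M" "norm (y - x) < min \<delta> (\<sigma> / C)" for y
  proof (cases "y = x")
    case False
    then obtain \<eta> where \<eta>: "\<eta> \<in> T" "R (x, \<eta>) = y" "norm \<eta> \<le> C * norm (y - x)"
      using \<delta>(2) y by (auto simp: dist_norm)
    have "\<eta> \<noteq> 0" using \<eta>(2) R0 False by auto
    moreover have "dist \<eta> 0 < \<sigma>" using \<eta>(3) y C by (simp add: pos_less_divide_eq mult.commute)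
    ultimately have f_y: "f y \<ge> f x + v \<bullet> \<eta> - c' * norm \<eta>" and y_\<eta>: "norm (y - x - \<eta>) \<le> c' * norm \<eta>"
      using \<sigma>(2)[OF \<eta>(1)] \<eta>(2) by auto
    have "v \<bullet> (y - x) - v \<bullet> \<eta> \<le> norm v * (c' * norm \<eta>)"
      using Cauchy_Schwarz_ineq2[of v "y - x - \<eta>"] mult_left_mono[OF y_\<eta> norm_ge_zero[of v]]
      by (simp add: inner_diff_right)
    then have "f x + v \<bullet> (y - x) - f y \<le> (norm v + 1) * c' * norm \<eta>"
      using f_y by (simp add: algebra_simps)
    also have "\<dots> = (c / C) * norm \<eta>"
    proof -
      have "norm v + 1 \<noteq> 0" using norm_ge_zero[of v] by linarith
      then show ?thesis using C by (simp add: c'_def)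
    qed
    also have "\<dots> \<le> (c / C) * (C * norm (y - x))" using \<eta>(3) c C by (intro mult_left_mono) auto
    also have "\<dots> = c * norm (y - x)" using C by simp
    finally show ?thesis .
  qed simp
  moreover have "min \<delta> (\<sigma> / C) > 0" using \<delta> \<sigma> C by simp
  ultimately show "\<exists>\<delta>>0. \<forall>y\<in>M. norm (y - x) < \<delta> \<longrightarrow> f x + v \<bullet> (y - x) - f y \<le> c * norm (y - x)"
    by blast
qed

lemma riem_frechet_subdiffI:
  fixes M :: "'a::euclidean_space set"
  assumes T: "subspace (tangent_space M x)" and v: "v \<in> tangent_space M x"
    and bound: "\<forall>c>0. \<exists>\<delta>>0. \<forall>y\<in>M. norm (y - x) < \<delta> \<longrightarrow> f x + v \<bullet> (y - x) - f y \<le> c * norm (y - x)"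
  shows "v \<in> riem_frechet_subdiff M f x"
proof -
  obtain \<delta> K DK where \<delta>: "\<delta> > 0"
    and dK: "\<And>y. y \<in> cball x \<delta> \<Longrightarrow> (K has_derivative (\<lambda>u. DK y \<bullet> u)) (at y)"
    and DK_cont: "continuous_on (cball x \<delta>) DK" and DKx: "DK x = 0" and Kx: "K x = 0"
    and K: "\<And>y. y \<in> M \<Longrightarrow> norm (y - x) < \<delta> \<Longrightarrow> f x + v \<bullet> (y - x) - f y \<le> K y"
    using C1_majorant[where q = "\<lambda>y. f x + v \<bullet> (y - x) - f y", OF bound] by blast
  define h where "h y = f x + v \<bullet> (y - x) - K y" for y
  define g where "g y = v - DK y" for y
  have "(h has_derivative (\<lambda>u. g y \<bullet> u)) (at y)" if "y \<in> cball x \<delta>" for y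
  proof -
    have "((\<lambda>y. f x + v \<bullet> (y - x) - K y) has_derivative (\<lambda>u. 0 + v \<bullet> (u - 0) - DK y \<bullet> u)) (at y)"
      by (intro has_derivative_diff has_derivative_add has_derivative_const has_derivative_inner_right
          has_derivative_ident dK[OF that])
    then show ?thesis
      unfolding h_def[abs_def] g_def
      by (rule has_derivative_eq_rhs) (simp add: fun_eq_iff inner_diff_left)
  qed
  moreover have "continuous_on (cball x \<delta>) g" unfolding g_def by (intro continuous_intros DK_cont)
  moreover have "\<forall>y\<in>M. dist y x < \<delta> \<longrightarrow> f x - h x \<le> f y - h y"
  proof (intro ballI impI)
    fix y assume "y \<in> M" "dist y x < \<delta>"
    then show "f x - h x \<le> f y - h y" using K[of y] Kx by (simp add: h_def dist_norm)
  qed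
  moreover have "proj_onto (tangent_space M x) (g x) = v"
    unfolding g_def DKx by (rule proj_onto_eqI[OF T v]) simp
  ultimately show ?thesis unfolding riem_frechet_subdiff_def using \<delta> by blast
qed

theorem proposition3p2:
  fixes M :: "'a::euclidean_space set" and f :: "'a \<Rightarrow> real"
    and R :: "'a \<times> 'a \<Rightarrow> 'a" and x v :: 'a
  assumes "embedded_submanifold M" and "riemannian_complete M"
    and "lower_semicontinuous f" and "x \<in> M" and "riem_retraction M R"
  shows "v \<in> riem_frechet_subdiff M f x \<longleftrightarrow>
     v \<in> tangent_space M x \<and>
     (\<exists>r. r \<in> o[at 0 within tangent_space M x](\<lambda>\<eta>. norm \<eta>) \<and>
        (\<forall>\<eta>\<in>tangent_space M x. f (R (x, \<eta>)) \<ge> f (R (x, 0)) + v \<bullet> \<eta> + r \<eta>))"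
proof
  assume "v \<in> riem_frechet_subdiff M f x"
  then show "v \<in> tangent_space M x \<and>
     (\<exists>r. r \<in> o[at 0 within tangent_space M x](\<lambda>\<eta>. norm \<eta>) \<and>
        (\<forall>\<eta>\<in>tangent_space M x. f (R (x, \<eta>)) \<ge> f (R (x, 0)) + v \<bullet> \<eta> + r \<eta>))"
    by (rule riem_frechet_subdiff_imp_expansion[OF assms(1,4,5)])
next
  assume "v \<in> tangent_space M x \<and>
     (\<exists>r. r \<in> o[at 0 within tangent_space M x](\<lambda>\<eta>. norm \<eta>) \<and>
        (\<forall>\<eta>\<in>tangent_space M x. f (R (x, \<eta>)) \<ge> f (R (x, 0)) + v \<bullet> \<eta> + r \<eta>))"
  then obtain r where v: "v \<in> tangent_space M x"
    and r: "r \<in> o[at 0 within tangent_space M x](\<lambda>\<eta>. norm \<eta>)"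
    and expansion: "\<forall>\<eta>\<in>tangent_space M x. f (R (x, \<eta>)) \<ge> f (R (x, 0)) + v \<bullet> \<eta> + r \<eta>"
    by blast
  show "v \<in> riem_frechet_subdiff M f x"
    by (rule riem_frechet_subdiffI[OF subspace_tangent_space[OF assms(1,4)] v
          expansion_imp_lower_bound_on_manifold[OF assms(1,4,5) r expansion]])
qed

end
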